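(* Let $K\ge1$, $N$ and $s$ be integers with $0\le s<N-2$, let $X_0,\dots,X_{K-1}\in\mathbb{R}$, let $f:\mathbb{R}\to\mathbb{R}$, let $\alpha_i=\cos\frac{(2i+1)\pi}{2K}$ for $i=0,\dots,K-1$, define $$u(z)=\sum_{i=0}^{K-1}\frac{(-1)^i/(z-\alpha_i)}{\sum_{j=0}^{K-1}(-1)^j/(z-\alpha_j)}X_i$$ (extended continuously by $u(\alpha_i)=X_i$), and let $g(z)=f(u(z))$, assumed to have a continuous second derivative on $[-1,1]$. Let $\mathcal{F}\subset\{0,\dots,N\}$ with $|\mathcal F|=N+1-s$, let $n=N-s$, let $z_0>\dots>z_n$ be the points $\{\cos\frac{j\pi}{N}:j\in\mathcal F\}$, and let $$r_{\mathcal F}(z)=\sum_{i=0}^{n}\frac{(-1)^i/(z-z_i)}{\sum_{j=0}^n(-1)^j/(z-z_j)}\,g(z_i).$$ Set $R=\frac{(s+1)(s+3)\pi^2}{4}$ and $\|h\|=\max_{z\in[-1,1]}|h(z)|$. Then $$\|r_{\mathcal F}-g\|\le 2(1+R)\sin\Big(\frac{(s+1)\pi}{2N}\Big)\|g''\|$$ if $N-s$ is odd, and $$\|r_{\mathcal F}-g\|\le 2(1+R)\sin\Big(\frac{(s+1)\pi}{2N}\Big)\big(\|g''\|+\|g'\|\big)$$ if $N-s$ is even.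
   Context: $\|h\|$ denotes the maximum norm of a function over $[-1,1]$. The interpolation points $z_j$ are a subset, of size $N+1-s$, of the Chebyshev points of the second kind $\cos\frac{k\pi}{N}$, $k=0,\dots,N$ (the $s$ missing points correspond to straggling workers). *)

theory Defs
  imports "HOL-Analysis.Analysis"
begin

definition berrut :: "(nat \<Rightarrow> real) \<Rightarrow> (nat \<Rightarrow> real) \<Rightarrow> nat \<Rightarrow> real \<Rightarrow> real" where
  "berrut x y n z =
     (if \<exists>i\<le>n. z = x i then y (LEAST i. i \<le> n \<and> z = x i)
      else (\<Sum>i\<le>n. ((-1)^i / (z - x i)) * y i) / (\<Sum>j\<le>n. (-1)^j / (z - x j)))"

definition cheb_alpha :: "nat \<Rightarrow> nat \<Rightarrow> real" where
  "cheb_alpha K i = cos ((2 * real i + 1) * pi / (2 * real K))"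

definition enc_u :: "nat \<Rightarrow> (nat \<Rightarrow> real) \<Rightarrow> real \<Rightarrow> real" where
  "enc_u K X = berrut (cheb_alpha K) X (K - 1)"

text \<open>The i-th surviving node z_i = cos(j_i pi / N), j_0 < j_1 < ... the elements of F,
  so that z_0 > z_1 > ... .\<close>
definition surv_node :: "nat \<Rightarrow> nat set \<Rightarrow> nat \<Rightarrow> real" where
  "surv_node N F i = cos (real (sorted_list_of_set F ! i) * pi / real N)"

definition dec_r :: "nat \<Rightarrow> nat \<Rightarrow> nat set \<Rightarrow> (real \<Rightarrow> real) \<Rightarrow> real \<Rightarrow> real" where
  "dec_r N s F g = berrut (surv_node N F) (\<lambda>i. g (surv_node N F i)) (N - s)"

definition supnorm :: "(real \<Rightarrow> real) \<Rightarrow> real" where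
  "supnorm h = (SUP z\<in>{-1..1}. \<bar>h z\<bar>)"

end

theory Submission
  imports Defs
begin

text \<open>Write r for the decoder and D for its denominator. For z not a node, r(z) - g(z) is
  the quotient of the alternating sum of the divided differences g[z_i, z] by D(z). Consecutive
  divided differences differ by at most ||g''|| (z_i - z_{i+1}) / 2 (Taylor's theorem, or the mean
  value theorem when z lies outside [z_{i+1}, z_i]), so pairing terms bounds the numerator by
  ||g''||, plus ||g'|| for the unpaired last term when n is even.

  For the denominator, the terms of D(z) on either side of z form alternating sums of monotone
  sequences, hence are bounded below by the difference of their two terms nearest to z. Losing s
  of the Chebyshev points leaves gaps of at most s + 1 angular steps, so every gap between
  surviving nodes is at most 2 sin((s+1) pi / (2N)) and at most R times each neighbouring gap;
  these two facts give |D(z)| \<ge> 1 / (2 (1 + R) sin((s+1) pi / (2N))).\<close>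

definition divdiff :: "(real \<Rightarrow> real) \<Rightarrow> real \<Rightarrow> real \<Rightarrow> real" where
  "divdiff g a b = (g a - g b) / (a - b)"

definition berrut_denom :: "(nat \<Rightarrow> real) \<Rightarrow> nat \<Rightarrow> real \<Rightarrow> real" where
  "berrut_denom x n z = (\<Sum>j\<le>n. (-1)^j / (z - x j))"

section \<open>Divided differences of a function with bounded second derivative\<close>

lemma DERIV_nonpos_imp_le_within:
  fixes h h' :: "real \<Rightarrow> real"
  assumes "a \<le> b"
    and "\<And>x. x \<in> {a..b} \<Longrightarrow> (h has_real_derivative h' x) (at x within {a..b})"
    and "\<And>x. x \<in> {a..b} \<Longrightarrow> h' x \<le> 0"
  shows "h b \<le> h a"
proof -
  obtain \<xi> where "\<xi> \<in> {a..b}" "h b - h a = h' \<xi> * (b - a)"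
    using mvt_very_simple[OF assms(1), of h "\<lambda>x. (*) (h' x)"] assms(2)
    by (auto simp: has_field_derivative_def)
  moreover have "h' \<xi> * (b - a) \<le> 0"
    using assms(1) assms(3)[OF \<open>\<xi> \<in> {a..b}\<close>] by (simp add: mult_nonpos_nonneg)
  ultimately show ?thesis by linarith
qed

lemma abs_diff_le_if_deriv_dominated:
  fixes h h' w w' :: "real \<Rightarrow> real"
  assumes "a \<le> b"
    and h: "\<And>x. x \<in> {a..b} \<Longrightarrow> (h has_real_derivative h' x) (at x within {a..b})"
    and w: "\<And>x. x \<in> {a..b} \<Longrightarrow> (w has_real_derivative w' x) (at x within {a..b})"
    and dom: "\<And>x. x \<in> {a..b} \<Longrightarrow> \<bar>h' x\<bar> \<le> w' x"
  shows "\<bar>h b - h a\<bar> \<le> w b - w a"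
proof -
  have "(\<lambda>x. h x - w x) b \<le> (\<lambda>x. h x - w x) a"
    by (rule DERIV_nonpos_imp_le_within[OF assms(1) DERIV_diff[OF h w]]) (use dom in force)+
  moreover have "(\<lambda>x. - h x - w x) b \<le> (\<lambda>x. - h x - w x) a"
    by (rule DERIV_nonpos_imp_le_within[OF assms(1) DERIV_diff[OF DERIV_minus[OF h] w]])
       (use dom in force)+
  ultimately show ?thesis by linarith
qed

locale C2_on_unit_interval =
  fixes g g1 g2 :: "real \<Rightarrow> real" and M1 M2 :: real
  assumes g_deriv: "\<And>z. z \<in> {-1..1} \<Longrightarrow> (g has_real_derivative g1 z) (at z within {-1..1})"
    and g1_deriv: "\<And>z. z \<in> {-1..1} \<Longrightarrow> (g1 has_real_derivative g2 z) (at z within {-1..1})"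
    and g1_bound: "\<And>z. z \<in> {-1..1} \<Longrightarrow> \<bar>g1 z\<bar> \<le> M1"
    and g2_bound: "\<And>z. z \<in> {-1..1} \<Longrightarrow> \<bar>g2 z\<bar> \<le> M2"
begin

lemma M1_nonneg: "0 \<le> M1"
  using g1_bound[of 0] by simp

lemma M2_nonneg: "0 \<le> M2"
  using g2_bound[of 0] by simp

lemma g_lipschitz: "t \<in> {-1..1} \<Longrightarrow> u \<in> {-1..1} \<Longrightarrow> \<bar>g u - g t\<bar> \<le> M1 * \<bar>u - t\<bar>"
  using field_differentiable_bound[of "{-1..1}" g g1 M1 u t] g_deriv g1_bound by auto

lemma g1_lipschitz: "t \<in> {-1..1} \<Longrightarrow> u \<in> {-1..1} \<Longrightarrow> \<bar>g1 u - g1 t\<bar> \<le> M2 * \<bar>u - t\<bar>"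
  using field_differentiable_bound[of "{-1..1}" g1 g2 M2 u t] g1_deriv g2_bound by auto

lemma taylor_remainder_bound:
  assumes t: "t \<in> {-1..1}" and u: "u \<in> {-1..1}"
  shows "\<bar>g u - g t - g1 t * (u - t)\<bar> \<le> M2 * (u - t)^2 / 2"
proof -
  define h where "h v = g v - g1 t * v" for v
  have h_deriv: "(h has_real_derivative g1 v - g1 t) (at v within {a..b})"
    if "v \<in> {a..b}" "{a..b} \<subseteq> {-1..1}" for v a b
    unfolding h_def using that
    by (auto intro!: derivative_eq_intros DERIV_subset[OF g_deriv])
  have h_deriv_bound: "\<bar>g1 v - g1 t\<bar> \<le> M2 * \<bar>v - t\<bar>" if "v \<in> {-1..1}" for v
    using g1_lipschitz[OF t that] .
  have "h u - h t = g u - g t - g1 t * (u - t)"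
    unfolding h_def by (simp add: algebra_simps)
  moreover have "\<bar>h u - h t\<bar> \<le> M2 * (u - t)^2 / 2"
  proof (cases "t \<le> u")
    case True
    have "\<bar>h u - h t\<bar> \<le> M2 * (u - t)^2 / 2 - M2 * (t - t)^2 / 2"
    proof (rule abs_diff_le_if_deriv_dominated[OF True h_deriv])
      fix v assume v: "v \<in> {t..u}"
      show "((\<lambda>v. M2 * (v - t)^2 / 2) has_real_derivative M2 * (v - t)) (at v within {t..u})"
        by (auto intro!: derivative_eq_intros)
      show "\<bar>g1 v - g1 t\<bar> \<le> M2 * (v - t)"
        using h_deriv_bound[of v] v t u by auto
    qed (use t u in auto)
    then show ?thesis by simp
  next
    case False
    have "\<bar>h t - h u\<bar> \<le> - M2 * (t - t)^2 / 2 - (- M2 * (t - u)^2 / 2)"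
    proof (rule abs_diff_le_if_deriv_dominated[OF _ h_deriv])
      fix v assume v: "v \<in> {u..t}"
      show "((\<lambda>v. - M2 * (t - v)^2 / 2) has_real_derivative M2 * (t - v)) (at v within {u..t})"
        by (auto intro!: derivative_eq_intros simp: field_simps)
      show "\<bar>g1 v - g1 t\<bar> \<le> M2 * (t - v)"
        using h_deriv_bound[of v] v t u by auto
    qed (use False t u in auto)
    then show ?thesis by (simp add: abs_minus_commute power2_commute)
  qed
  ultimately show ?thesis by simp
qed

lemma divdiff_bound:
  assumes "t \<in> {-1..1}" "z \<in> {-1..1}" "t \<noteq> z"
  shows "\<bar>divdiff g t z\<bar> \<le> M1"
  using g_lipschitz[OF assms(2,1)] assms(3)
  by (simp add: divdiff_def abs_divide divide_le_eq abs_minus_commute)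

lemma divdiff_deriv_bound:
  assumes "v \<in> {-1..1}" "z \<in> {-1..1}" "v \<noteq> z"
  shows "\<bar>(g1 v * (v - z) - (g v - g z)) / (v - z)^2\<bar> \<le> M2 / 2"
proof -
  have "\<bar>g1 v * (v - z) - (g v - g z)\<bar> \<le> M2 * (v - z)^2 / 2"
    using taylor_remainder_bound[OF assms(1,2)]
    by (simp add: abs_minus_commute power2_commute algebra_simps)
  then show ?thesis
    using assms(3) by (simp add: abs_divide divide_le_eq)
qed

lemma divdiff_minus_deriv_bound:
  assumes "t \<in> {-1..1}" "z \<in> {-1..1}" "t \<noteq> z"
  shows "\<bar>divdiff g t z - g1 z\<bar> \<le> M2 * \<bar>t - z\<bar> / 2"
proof -
  have "divdiff g t z - g1 z = (g t - g z - g1 z * (t - z)) / (t - z)"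
    using assms(3) by (simp add: divdiff_def field_simps)
  moreover have "\<bar>g t - g z - g1 z * (t - z)\<bar> \<le> (M2 * \<bar>t - z\<bar> / 2) * \<bar>t - z\<bar>"
    using taylor_remainder_bound[OF assms(2,1)] by (simp add: power2_eq_square abs_mult_self_eq)
  ultimately show ?thesis
    using assms(3) by (simp add: abs_divide divide_le_eq)
qed

lemma divdiff_pair_bound:
  assumes "a \<in> {-1..1}" "b \<in> {-1..1}" "z \<in> {-1..1}" "b < a" "z \<noteq> a" "z \<noteq> b"
  shows "\<bar>divdiff g a z - divdiff g b z\<bar> \<le> M2 / 2 * (a - b)"
proof (cases "b < z \<and> z < a")
  case True
  have "\<bar>divdiff g a z - divdiff g b z\<bar> \<le> \<bar>divdiff g a z - g1 z\<bar> + \<bar>divdiff g b z - g1 z\<bar>"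
    by linarith
  also have "\<dots> \<le> M2 * \<bar>a - z\<bar> / 2 + M2 * \<bar>b - z\<bar> / 2"
    using divdiff_minus_deriv_bound assms by (intro add_mono) auto
  also have "\<dots> = M2 / 2 * (a - b)"
    using True by (simp add: field_simps)
  finally show ?thesis .
next
  case False
  then have outside: "z \<notin> {b..a}"
    using assms by auto
  define \<phi> where "\<phi> v = (g v - g z) / (v - z)" for v
  have "norm (\<phi> a - \<phi> b) \<le> M2 / 2 * norm (a - b)"
  proof (rule field_differentiable_bound[of "{b..a}"])
    fix v assume v: "v \<in> {b..a}"
    then have "v \<in> {-1..1}" "v \<noteq> z"
      using assms outside by auto
    show "(\<phi> has_field_derivative (g1 v * (v - z) - (g v - g z)) / (v - z)^2) (at v within {b..a})"
      unfolding \<phi>_def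
      using DERIV_divide[OF DERIV_diff[OF DERIV_subset[OF g_deriv] DERIV_const] DERIV_diff[OF DERIV_ident DERIV_const]]
        v \<open>v \<in> {-1..1}\<close> \<open>v \<noteq> z\<close> assms
      by (auto simp: power2_eq_square)
    show "norm ((g1 v * (v - z) - (g v - g z)) / (v - z)^2) \<le> M2 / 2"
      using divdiff_deriv_bound[OF \<open>v \<in> {-1..1}\<close> assms(3) \<open>v \<noteq> z\<close>] by simp
  qed (use assms in auto)
  then show ?thesis
    using assms(4) by (simp add: \<phi>_def divdiff_def)
qed

lemma alternating_divdiff_pairs_bound:
  fixes x :: "nat \<Rightarrow> real"
  assumes dec: "\<And>i. i < n \<Longrightarrow> x (Suc i) < x i"
    and nodes: "\<And>i. i \<le> n \<Longrightarrow> x i \<in> {-1..1}"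
    and z: "z \<in> {-1..1}" "\<And>i. i \<le> n \<Longrightarrow> z \<noteq> x i"
    and m: "2 * m \<le> Suc n"
  shows "\<bar>\<Sum>i<2*m. (-1)^i * divdiff g (x i) z\<bar> \<le> M2 / 2 * (x 0 - x (2*m - 1))"
  \<comment> \<open>For m = 0 the right-hand side is 0, as 2 * 0 - 1 = 0 in nat.\<close>
  using m
proof (induction m)
  case 0
  then show ?case by simp
next
  case (Suc m)
  define \<phi> where "\<phi> i = divdiff g (x i) z" for i
  have split: "(\<Sum>i<2 * Suc m. (-1)^i * \<phi> i) = (\<Sum>i<2*m. (-1)^i * \<phi> i) + (\<phi> (2*m) - \<phi> (Suc (2*m)))"
    by simp
  have pair: "\<bar>\<phi> (2*m) - \<phi> (Suc (2*m))\<bar> \<le> M2 / 2 * (x (2*m) - x (Suc (2*m)))"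
    unfolding \<phi>_def by (rule divdiff_pair_bound) (use nodes z dec[of "2*m"] Suc.prems in auto)
  have "x (2*m) \<le> x (2*m - 1)"
    using dec[of "2*m - 1"] Suc.prems by (cases m) auto
  then have "M2 / 2 * (x 0 - x (2*m - 1)) + M2 / 2 * (x (2*m) - x (Suc (2*m)))
      \<le> M2 / 2 * (x 0 - x (2 * Suc m - 1))"
    using M2_nonneg by (simp add: algebra_simps mult_left_mono)
  moreover have "\<bar>\<Sum>i<2*m. (-1)^i * \<phi> i\<bar> \<le> M2 / 2 * (x 0 - x (2*m - 1))"
    using Suc unfolding \<phi>_def by simp
  ultimately have "\<bar>\<Sum>i<2 * Suc m. (-1)^i * \<phi> i\<bar> \<le> M2 / 2 * (x 0 - x (2 * Suc m - 1))"
    using pair abs_triangle_ineq[of "\<Sum>i<2*m. (-1)^i * \<phi> i" "\<phi> (2*m) - \<phi> (Suc (2*m))"]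
    unfolding split by linarith
  then show ?case
    unfolding \<phi>_def .
qed

lemma alternating_divdiff_sum_bound:
  fixes x :: "nat \<Rightarrow> real"
  assumes dec: "\<And>i. i < n \<Longrightarrow> x (Suc i) < x i"
    and nodes: "\<And>i. i \<le> n \<Longrightarrow> x i \<in> {-1..1}"
    and z: "z \<in> {-1..1}" "\<And>i. i \<le> n \<Longrightarrow> z \<noteq> x i"
  shows "\<bar>\<Sum>i\<le>n. (-1)^i * divdiff g (x i) z\<bar> \<le> (if odd n then M2 else M2 + M1)"
proof -
  define \<phi> where "\<phi> i = divdiff g (x i) z" for i
  note pairs = alternating_divdiff_pairs_bound[of n x z, OF dec nodes z, folded \<phi>_def]
  have x_range: "x 0 - x i \<le> 2" if "i \<le> n" for i
    using nodes[of 0] nodes[OF that] by auto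
  show ?thesis
  proof (cases "odd n")
    case True
    then obtain m where m: "n = 2*m + 1" by (rule oddE)
    have "(\<Sum>i\<le>n. (-1)^i * \<phi> i) = (\<Sum>i<2 * Suc m. (-1)^i * \<phi> i)"
      using m by (simp add: lessThan_Suc_atMost[symmetric])
    then have "\<bar>\<Sum>i\<le>n. (-1)^i * \<phi> i\<bar> \<le> M2 / 2 * (x 0 - x n)"
      using pairs[of "Suc m"] m by simp
    also have "\<dots> \<le> M2"
      using x_range[of n] M2_nonneg by (simp add: mult_left_mono)
    finally show ?thesis
      using True unfolding \<phi>_def by simp
  next
    case False
    then obtain m where m: "n = 2*m" by (auto elim: evenE)
    have "(\<Sum>i\<le>n. (-1)^i * \<phi> i) = (\<Sum>i<2*m. (-1)^i * \<phi> i) + \<phi> n"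
      using m by (simp add: lessThan_Suc_atMost[symmetric])
    moreover have "\<bar>\<Sum>i<2*m. (-1)^i * \<phi> i\<bar> \<le> M2"
    proof -
      have "M2 / 2 * (x 0 - x (2*m - 1)) \<le> M2 / 2 * 2"
        by (rule mult_left_mono) (use x_range[of "2*m - 1"] M2_nonneg m in auto)
      then show ?thesis
        using pairs[of m] m by simp
    qed
    moreover have "\<bar>\<phi> n\<bar> \<le> M1"
      unfolding \<phi>_def using divdiff_bound nodes z by auto
    ultimately show ?thesis
      using False unfolding \<phi>_def by simp
  qed
qed

end

section \<open>The Berrut denominator at quasi-uniform nodes\<close>

lemma alternating_sum_antimono:
  fixes t :: "nat \<Rightarrow> real"
  assumes "\<And>i. lo \<le> i \<Longrightarrow> i < lo + d \<Longrightarrow> t (Suc i) \<le> t i"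
    and "\<And>i. lo \<le> i \<Longrightarrow> i \<le> lo + d \<Longrightarrow> 0 \<le> t i"
  shows "0 \<le> (-1)^lo * (\<Sum>i=lo..lo+d. (-1)^i * t i) \<and> (-1)^lo * (\<Sum>i=lo..lo+d. (-1)^i * t i) \<le> t lo
     \<and> (0 < d \<longrightarrow> t lo - t (Suc lo) \<le> (-1)^lo * (\<Sum>i=lo..lo+d. (-1)^i * t i))"
  using assms
proof (induction d arbitrary: lo)
  case 0
  then show ?case
    by (simp flip: power_add add: mult_2[symmetric])
next
  case (Suc d)
  define S where "S = (-1::real)^(Suc lo) * (\<Sum>i=Suc lo..Suc lo+d. (-1)^i * t i)"
  have "0 \<le> S \<and> S \<le> t (Suc lo)"
    using Suc.IH[of "Suc lo"] Suc.prems unfolding S_def by auto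
  moreover have "(-1)^lo * (\<Sum>i=lo..lo+Suc d. (-1)^i * t i) = t lo - S"
    unfolding S_def by (subst sum.atLeast_Suc_atMost) (auto simp: algebra_simps simp flip: power_add)
  moreover have "t (Suc lo) \<le> t lo"
    using Suc.prems(1)[of lo] by simp
  ultimately show ?case
    by auto
qed

lemma alternating_sum_mono:
  fixes t :: "nat \<Rightarrow> real"
  assumes "\<And>i. i < d \<Longrightarrow> t i \<le> t (Suc i)"
    and "\<And>i. i \<le> d \<Longrightarrow> 0 \<le> t i"
  shows "0 \<le> (-1)^d * (\<Sum>i\<le>d. (-1)^i * t i) \<and> (-1)^d * (\<Sum>i\<le>d. (-1)^i * t i) \<le> t d
     \<and> (0 < d \<longrightarrow> t d - t (d - 1) \<le> (-1)^d * (\<Sum>i\<le>d. (-1)^i * t i))"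
  using assms
proof (induction d)
  case 0
  then show ?case by simp
next
  case (Suc d)
  define S where "S = (-1::real)^d * (\<Sum>i\<le>d. (-1)^i * t i)"
  have "0 \<le> S \<and> S \<le> t d"
    using Suc.IH Suc.prems unfolding S_def by auto
  moreover have "(-1)^(Suc d) * (\<Sum>i\<le>Suc d. (-1)^i * t i) = t (Suc d) - S"
    unfolding S_def by (simp add: algebra_simps flip: power_add)
  moreover have "t d \<le> t (Suc d)"
    using Suc.prems(1)[of d] by simp
  ultimately show ?case
    by auto
qed

lemma one_le_mult_reciprocal_diff:
  fixes p gap c K :: real
  assumes "0 < p" "0 < gap" "p \<le> c" "c * (c + gap) \<le> K * gap"
  shows "1 \<le> K * (1 / p - 1 / (p + gap))"
proof -
  have "p * (p + gap) \<le> c * (c + gap)"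
    using assms(1-3) by (intro mult_mono) auto
  then have "p * (p + gap) \<le> K * gap"
    using assms(4) by linarith
  moreover have "1 / p - 1 / (p + gap) = gap / (p * (p + gap))"
    using assms(1,2) by (simp add: field_simps)
  ultimately show ?thesis
    using assms(1,2) by (simp add: le_divide_eq)
qed

lemma one_le_mult_reciprocal_diff_of_gaps:
  fixes d w gap \<sigma> R :: real
  assumes "0 < d" "0 < gap" "0 \<le> R" "2 * d \<le> w" "w \<le> 2 * \<sigma>" "w \<le> R * gap"
  shows "1 \<le> 2 * \<sigma> * (1 + R) * (1 / d - 1 / (d + gap))"
proof (rule one_le_mult_reciprocal_diff[OF assms(1,2), where c = "w / 2"])
  have "0 \<le> R * gap"
    using assms(2,3) by simp
  then have "w / 2 + gap \<le> 2 * (1 + R) * gap"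
    using assms(2,6) by (simp add: algebra_simps)
  then have "w / 2 * (w / 2 + gap) \<le> \<sigma> * (2 * (1 + R) * gap)"
    using assms by (intro mult_mono) auto
  then show "w / 2 * (w / 2 + gap) \<le> 2 * \<sigma> * (1 + R) * gap"
    by (simp add: algebra_simps)
qed (use assms in auto)

lemma berrut_denom_split:
  assumes "k \<le> n"
  shows "berrut_denom x n z
    = (\<Sum>i=Suc k..n. (-1)^i * (1 / (z - x i))) - (\<Sum>i\<le>k. (-1)^i * (1 / (x i - z)))"
proof -
  have "{..n} = {..k} \<union> {Suc k..n}"
    using assms by auto
  then have "berrut_denom x n z = (\<Sum>i\<le>k. (-1)^i / (z - x i)) + (\<Sum>i=Suc k..n. (-1)^i / (z - x i))"
    unfolding berrut_denom_def by (simp add: sum.union_disjoint)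
  moreover have "(-1)^i / (z - x i) = - ((-1)^i * (1 / (x i - z)))" for i
    by (metis divide_minus_right minus_diff_eq times_divide_eq_right mult.right_neutral)
  ultimately show ?thesis
    by (simp add: sum_negf)
qed

locale quasi_uniform_nodes =
  fixes x :: "nat \<Rightarrow> real" and n :: nat and \<sigma> R :: real
  assumes n_pos: "1 \<le> n"
    and decreasing: "\<And>i. i < n \<Longrightarrow> x (Suc i) < x i"
    and gap_le: "\<And>i. i < n \<Longrightarrow> x i - x (Suc i) \<le> 2 * \<sigma>"
    and gap_le_prev: "\<And>i. 0 < i \<Longrightarrow> i < n \<Longrightarrow> x i - x (Suc i) \<le> R * (x (i - 1) - x i)"
    and gap_le_next: "\<And>i. Suc i < n \<Longrightarrow> x i - x (Suc i) \<le> R * (x (Suc i) - x (Suc (Suc i)))"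
    and top_gap_le: "1 - x 0 \<le> 2 * \<sigma>"
    and top_gap_le_next: "1 - x 0 \<le> R * (x 0 - x 1)"
    and bottom_gap_le: "x n + 1 \<le> 2 * \<sigma>"
    and bottom_gap_le_prev: "x n + 1 \<le> R * (x (n - 1) - x n)"
    and R_nonneg: "0 \<le> R"
begin

lemma sigma_pos: "0 < \<sigma>"
  using decreasing[of 0] gap_le[of 0] n_pos by simp

lemma decreasing_less: "i < j \<Longrightarrow> j \<le> n \<Longrightarrow> x j < x i"
proof (induction j)
  case (Suc j)
  then show ?case
    using decreasing[of j] by (cases "i = j") auto
qed simp

lemma decreasing_le: "i \<le> j \<Longrightarrow> j \<le> n \<Longrightarrow> x j \<le> x i"
  using decreasing_less[of i j] by (cases "i = j") auto

text \<open>The nodes above z, summed from the one nearest to z, form an alternating sum of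
  decreasing positive terms; likewise the nodes below z.\<close>

lemma upper_block_bounds:
  assumes "k \<le> n" "z < x k"
  defines "A \<equiv> (-1)^k * (\<Sum>i\<le>k. (-1)^i * (1 / (x i - z)))"
  shows "0 \<le> A" and "0 < k \<Longrightarrow> 1 / (x k - z) - 1 / (x (k - 1) - z) \<le> A"
    and "k = 0 \<Longrightarrow> A = 1 / (x 0 - z)"
proof -
  have pos: "0 < x i - z" if "i \<le> k" for i
    using decreasing_le[of i k] assms(1,2) that by simp
  have "(1 / (x i - z)) \<le> 1 / (x (Suc i) - z)" if "i < k" for i
    using pos[of i] pos[of "Suc i"] decreasing[of i] assms(1) that
    by (intro divide_left_mono mult_pos_pos) auto
  then have "0 \<le> A \<and> (0 < k \<longrightarrow> 1 / (x k - z) - 1 / (x (k - 1) - z) \<le> A)"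
    unfolding A_def using alternating_sum_mono[of k "\<lambda>i. 1 / (x i - z)"] pos by fastforce
  then show "0 \<le> A" "0 < k \<Longrightarrow> 1 / (x k - z) - 1 / (x (k - 1) - z) \<le> A"
    by auto
  show "k = 0 \<Longrightarrow> A = 1 / (x 0 - z)"
    unfolding A_def by simp
qed

lemma lower_block_bounds:
  assumes "m \<le> n" "x m < z"
  defines "B \<equiv> (-1)^m * (\<Sum>i=m..n. (-1)^i * (1 / (z - x i)))"
  shows "0 \<le> B" and "m < n \<Longrightarrow> 1 / (z - x m) - 1 / (z - x (Suc m)) \<le> B"
    and "m = n \<Longrightarrow> B = 1 / (z - x n)"
proof -
  have pos: "0 < z - x i" if "m \<le> i" "i \<le> n" for i
    using decreasing_le[of m i] assms(2) that by simp
  have "1 / (z - x (Suc i)) \<le> 1 / (z - x i)" if "m \<le> i" "i < m + (n - m)" for i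
    using pos[of i] pos[of "Suc i"] decreasing[of i] assms(1) that
    by (intro divide_left_mono mult_pos_pos) auto
  then have "0 \<le> B \<and> (0 < n - m \<longrightarrow> 1 / (z - x m) - 1 / (z - x (Suc m)) \<le> B)"
    unfolding B_def using alternating_sum_antimono[of m "n - m" "\<lambda>i. 1 / (z - x i)"] pos assms(1)
    by fastforce
  then show "0 \<le> B" "m < n \<Longrightarrow> 1 / (z - x m) - 1 / (z - x (Suc m)) \<le> B"
    by auto
  show "m = n \<Longrightarrow> B = 1 / (z - x n)"
    unfolding B_def by (simp flip: power_add add: mult_2[symmetric])
qed

lemma denom_bound_above_nodes:
  assumes "x 0 < z" "z \<le> 1"
  shows "1 \<le> 2 * \<sigma> * (1 + R) * \<bar>berrut_denom x n z\<bar>"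
proof -
  define B where "B = (-1)^0 * (\<Sum>i=0..n. (-1)^i * (1 / (z - x i)))"
  define gap where "gap = x 0 - x 1"
  have gap_pos: "0 < gap"
    using decreasing[of 0] n_pos unfolding gap_def by simp
  have "berrut_denom x n z = B"
    unfolding B_def berrut_denom_def atMost_atLeast0 by simp
  moreover have "1 / (z - x 0) - 1 / (z - x 0 + gap) \<le> B"
    using lower_block_bounds(2)[of 0 z] assms n_pos unfolding B_def gap_def by simp
  then have "2 * \<sigma> * (1 + R) * (1 / (z - x 0) - 1 / (z - x 0 + gap)) \<le> 2 * \<sigma> * (1 + R) * \<bar>B\<bar>"
    using sigma_pos R_nonneg by (intro mult_left_mono) auto
  moreover have "1 \<le> 2 * \<sigma> * (1 + R) * (1 / (z - x 0) - 1 / (z - x 0 + gap))"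
  proof (rule one_le_mult_reciprocal_diff[where c = "1 - x 0"])
    have "1 - x 0 + gap \<le> (1 + R) * gap"
      using top_gap_le_next unfolding gap_def by (simp add: algebra_simps)
    then have "(1 - x 0) * (1 - x 0 + gap) \<le> (2 * \<sigma>) * ((1 + R) * gap)"
      using top_gap_le assms gap_pos by (intro mult_mono) auto
    then show "(1 - x 0) * (1 - x 0 + gap) \<le> 2 * \<sigma> * (1 + R) * gap"
      by (simp add: algebra_simps)
  qed (use assms gap_pos in auto)
  ultimately show ?thesis
    by (metis order_trans)
qed

lemma denom_bound_below_nodes:
  assumes "-1 \<le> z" "z < x n"
  shows "1 \<le> 2 * \<sigma> * (1 + R) * \<bar>berrut_denom x n z\<bar>"
proof -
  define A where "A = (-1)^n * (\<Sum>i\<le>n. (-1)^i * (1 / (x i - z)))"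
  define gap where "gap = x (n - 1) - x n"
  have gap_pos: "0 < gap"
    using decreasing[of "n - 1"] n_pos unfolding gap_def by simp
  have "\<bar>berrut_denom x n z\<bar> = \<bar>A\<bar>"
    using berrut_denom_split[of n n x z] unfolding A_def by (simp add: abs_mult)
  moreover have "1 / (x n - z) - 1 / (x n - z + gap) \<le> A"
    using upper_block_bounds(2)[of n z] assms n_pos unfolding A_def gap_def by simp
  then have "2 * \<sigma> * (1 + R) * (1 / (x n - z) - 1 / (x n - z + gap)) \<le> 2 * \<sigma> * (1 + R) * \<bar>A\<bar>"
    using sigma_pos R_nonneg by (intro mult_left_mono) auto
  moreover have "1 \<le> 2 * \<sigma> * (1 + R) * (1 / (x n - z) - 1 / (x n - z + gap))"
  proof (rule one_le_mult_reciprocal_diff[where c = "x n + 1"])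
    have "x n + 1 + gap \<le> (1 + R) * gap"
      using bottom_gap_le_prev unfolding gap_def by (simp add: algebra_simps)
    then have "(x n + 1) * (x n + 1 + gap) \<le> (2 * \<sigma>) * ((1 + R) * gap)"
      using bottom_gap_le assms gap_pos by (intro mult_mono) auto
    then show "(x n + 1) * (x n + 1 + gap) \<le> 2 * \<sigma> * (1 + R) * gap"
      by (simp add: algebra_simps)
  qed (use assms gap_pos in auto)
  ultimately show ?thesis
    by (metis order_trans)
qed

lemma scale_ge_two_sigma: "2 * \<sigma> \<le> 2 * \<sigma> * (1 + R)"
  using sigma_pos R_nonneg by simp

text \<open>Between two consecutive nodes, the block on the side of the nearer node already
  bounds the denominator from below.\<close>

lemma upper_block_dominates:
  assumes k: "k < n" and z: "x (Suc k) < z" "z < x k" and near: "x k - z \<le> z - x (Suc k)"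
  shows "1 \<le> 2 * \<sigma> * (1 + R) * ((-1)^k * (\<Sum>i\<le>k. (-1)^i * (1 / (x i - z))))"
proof (cases "k = 0")
  case True
  have "2 * (x k - z) \<le> 2 * \<sigma> * (1 + R)"
    using near gap_le[OF k] by (intro order_trans[OF _ scale_ge_two_sigma]) argo
  then show ?thesis
    using upper_block_bounds(3)[of k z] True k z by (simp add: le_divide_eq)
next
  case False
  define gap where "gap = x (k - 1) - x k"
  have "1 \<le> 2 * \<sigma> * (1 + R) * (1 / (x k - z) - 1 / (x k - z + gap))"
    by (rule one_le_mult_reciprocal_diff_of_gaps[where w = "x k - x (Suc k)"])
      (use z near decreasing[of "k - 1"] gap_le[OF k] gap_le_prev[of k] False k R_nonneg
        in \<open>auto simp: gap_def\<close>)
  also have "\<dots> \<le> 2 * \<sigma> * (1 + R) * ((-1)^k * (\<Sum>i\<le>k. (-1)^i * (1 / (x i - z))))"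
    using upper_block_bounds(2)[of k z] False k z sigma_pos R_nonneg
    unfolding gap_def by (intro mult_left_mono) auto
  finally show ?thesis .
qed

lemma lower_block_dominates:
  assumes k: "k < n" and z: "x (Suc k) < z" "z < x k" and near: "z - x (Suc k) \<le> x k - z"
  shows "1 \<le> 2 * \<sigma> * (1 + R) * ((-1)^Suc k * (\<Sum>i=Suc k..n. (-1)^i * (1 / (z - x i))))"
proof (cases "Suc k = n")
  case True
  have "2 * (z - x (Suc k)) \<le> 2 * \<sigma> * (1 + R)"
    using near gap_le[OF k] by (intro order_trans[OF _ scale_ge_two_sigma]) argo
  then show ?thesis
    using lower_block_bounds(3)[of "Suc k" z] True z by (simp add: le_divide_eq)
next
  case False
  define gap where "gap = x (Suc k) - x (Suc (Suc k))"
  have "1 \<le> 2 * \<sigma> * (1 + R) * (1 / (z - x (Suc k)) - 1 / (z - x (Suc k) + gap))"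
    by (rule one_le_mult_reciprocal_diff_of_gaps[where w = "x k - x (Suc k)"])
      (use z near decreasing[of "Suc k"] gap_le[OF k] gap_le_next[of k] False k R_nonneg
        in \<open>auto simp: gap_def\<close>)
  also have "\<dots> \<le> 2 * \<sigma> * (1 + R) * ((-1)^Suc k * (\<Sum>i=Suc k..n. (-1)^i * (1 / (z - x i))))"
    using lower_block_bounds(2)[of "Suc k" z] False k z sigma_pos R_nonneg
    unfolding gap_def by (intro mult_left_mono) auto
  finally show ?thesis .
qed

lemma denom_bound_between_nodes:
  assumes k: "k < n" and z: "x (Suc k) < z" "z < x k"
  shows "1 \<le> 2 * \<sigma> * (1 + R) * \<bar>berrut_denom x n z\<bar>"
proof -
  define A where "A = (-1)^k * (\<Sum>i\<le>k. (-1)^i * (1 / (x i - z)))"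
  define B where "B = (-1)^Suc k * (\<Sum>i=Suc k..n. (-1)^i * (1 / (z - x i)))"
  have AB: "0 \<le> A" "0 \<le> B"
    using upper_block_bounds(1)[of k z] lower_block_bounds(1)[of "Suc k" z] k z
    unfolding A_def B_def by auto
  have "(-1)^Suc k * berrut_denom x n z = A + B"
    unfolding berrut_denom_split[OF less_imp_le[OF k]] A_def B_def by (simp add: right_diff_distrib)
  then have "\<bar>berrut_denom x n z\<bar> = A + B"
    using AB by (metis abs_minus_cancel abs_of_nonneg add_nonneg_nonneg abs_power_minus
        mult_1 power_one abs_mult abs_neg_one)
  moreover have "1 \<le> 2 * \<sigma> * (1 + R) * A \<or> 1 \<le> 2 * \<sigma> * (1 + R) * B"
    using upper_block_dominates[OF k z] lower_block_dominates[OF k z] unfolding A_def B_def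
    by linarith
  moreover have "0 \<le> 2 * \<sigma> * (1 + R)"
    using sigma_pos R_nonneg by simp
  ultimately show ?thesis
    using AB by (auto simp: distrib_left intro: order_trans add_increasing add_increasing2)
qed

lemma berrut_denom_lower_bound:
  assumes "z \<in> {-1..1}" and "\<And>i. i \<le> n \<Longrightarrow> z \<noteq> x i"
  shows "1 \<le> 2 * \<sigma> * (1 + R) * \<bar>berrut_denom x n z\<bar>"
proof -
  consider "x 0 < z" | "z < x n" | k where "k < n" "x (Suc k) < z" "z < x k"
  proof (cases "x 0 < z \<or> z < x n")
    case False
    define k where "k = Max {i. i \<le> n \<and> z < x i}"
    have fin: "finite {i. i \<le> n \<and> z < x i}"
      by simp
    moreover have "0 \<in> {i. i \<le> n \<and> z < x i}"
      using False assms(2)[of 0] by fastforce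
    ultimately have "k \<in> {i. i \<le> n \<and> z < x i}"
      unfolding k_def by (intro Max_in) auto
    then have "k \<le> n" "z < x k"
      by auto
    moreover have "k \<noteq> n"
      using False \<open>z < x k\<close> by auto
    moreover have "\<not> z < x (Suc k)"
    proof
      assume "z < x (Suc k)"
      then have "Suc k \<in> {i. i \<le> n \<and> z < x i}"
        using \<open>k \<le> n\<close> \<open>k \<noteq> n\<close> by simp
      then show False
        using Max_ge[OF fin] unfolding k_def[symmetric] by fastforce
    qed
    ultimately show ?thesis
      using that(3)[of k] assms(2)[of "Suc k"] by fastforce
  qed auto
  then show ?thesis
    using denom_bound_above_nodes denom_bound_below_nodes denom_bound_between_nodes assms(1)
    by cases auto
qed

end

section \<open>Surviving Chebyshev points are quasi-uniform\<close>

lemma jordan_inequality: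
  fixes x :: real assumes "0 \<le> x" "x \<le> pi / 2"
  shows "2 * x / pi \<le> sin x"
proof -
  have cv: "convex_on {0..pi/2} (\<lambda>x. - sin x)"
  proof (rule convex_on_realI[where f' = "\<lambda>x. - cos x"])
    show "connected {0..pi/2::real}" by simp
    show "((\<lambda>x. - sin x) has_real_derivative - cos x) (at x)" for x :: real
      by (auto intro!: derivative_eq_intros)
    show "- cos x \<le> - cos y" if "x \<in> {0..pi/2}" "y \<in> {0..pi/2}" "x \<le> y" for x y :: real
      using cos_monotone_0_pi_le[of x y] that by auto
  qed
  define t where "t = 2 * x / pi"
  have t0: "0 \<le> t" "t \<le> 1" unfolding t_def using assms pi_gt_zero by (auto simp: field_simps)
  have "- sin ((1 - t) *\<^sub>R 0 + t *\<^sub>R (pi/2)) \<le> (1 - t) * (- sin 0) + t * (- sin (pi/2))"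
    by (rule convex_onD[OF cv]) (use t0 pi_gt_zero in auto)
  moreover have "(1 - t) *\<^sub>R 0 + t *\<^sub>R (pi/2) = x" unfolding t_def by simp
  ultimately show ?thesis unfolding t_def by simp
qed

lemma cos_diff_le_sin_half_width:
  fixes \<beta> \<gamma> w :: real
  assumes "0 \<le> \<beta>" "\<beta> \<le> \<gamma>" "\<gamma> \<le> pi" "\<gamma> - \<beta> \<le> w" "w \<le> pi"
  shows "cos \<beta> - cos \<gamma> \<le> 2 * sin (w / 2)"
proof -
  have "sin ((\<beta> + \<gamma>) / 2) * sin ((\<gamma> - \<beta>) / 2) \<le> 1 * sin (w / 2)"
  proof (rule mult_mono)
    show "sin ((\<gamma> - \<beta>) / 2) \<le> sin (w / 2)"
      by (rule sin_monotone_2pi_le) (use assms in auto)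
    show "0 \<le> sin ((\<gamma> - \<beta>) / 2)"
      by (rule sin_ge_zero) (use assms in auto)
  qed simp_all
  then show ?thesis
    unfolding cos_diff_cos by simp
qed

lemma sin_half_diff_le:
  fixes \<beta> \<gamma> \<delta> :: real and s :: nat
  assumes "\<beta> \<le> \<gamma>" "\<gamma> - \<beta> \<le> (real s + 1) * \<delta>" "0 < \<delta>" "\<delta> \<le> pi"
  shows "sin ((\<gamma> - \<beta>) / 2) \<le> (real s + 1) * (pi / 2) * sin (\<delta> / 2)"
proof -
  have "sin ((\<gamma> - \<beta>) / 2) \<le> (\<gamma> - \<beta>) / 2"
    by (rule sin_x_le_x) (use assms in auto)
  also have "\<dots> \<le> (real s + 1) * (pi / 2) * (\<delta> / pi)"
    using assms by simp
  also have "\<dots> \<le> (real s + 1) * (pi / 2) * sin (\<delta> / 2)"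
    using jordan_inequality[of "\<delta> / 2"] assms by (intro mult_left_mono) auto
  finally show ?thesis .
qed

lemma sin_half_sum_le:
  fixes \<beta> \<gamma> \<delta> :: real and s :: nat
  assumes "\<delta> \<le> \<beta>" "\<beta> \<le> \<gamma>" "\<gamma> - \<beta> \<le> (real s + 1) * \<delta>" "\<gamma> \<le> pi" "0 < \<delta>"
  shows "sin ((\<beta> + \<gamma>) / 2) \<le> (real s + 3) * (pi / 2) * sin (\<beta> - \<delta> / 2)"
proof (cases "\<beta> - \<delta> / 2 \<le> pi / 2")
  case True
  have "sin ((\<beta> + \<gamma>) / 2) \<le> (\<beta> + \<gamma>) / 2"
    by (rule sin_x_le_x) (use assms in auto)
  also have "\<dots> \<le> (real s + 3) * (\<beta> - \<delta> / 2)"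
  proof -
    have "(\<beta> + \<gamma>) / 2 \<le> (\<beta> - \<delta> / 2) + (real s + 2) * (\<delta> / 2)"
      using assms by (simp add: algebra_simps)
    moreover have "(real s + 2) * (\<delta> / 2) \<le> (real s + 2) * (\<beta> - \<delta> / 2)"
      using assms by (intro mult_left_mono) auto
    moreover have "(\<beta> - \<delta> / 2) + (real s + 2) * (\<beta> - \<delta> / 2) = (real s + 3) * (\<beta> - \<delta> / 2)"
      by (simp add: algebra_simps)
    ultimately show ?thesis
      by linarith
  qed
  also have "\<dots> = (real s + 3) * (pi / 2) * (2 * (\<beta> - \<delta> / 2) / pi)"
    by simp
  also have "\<dots> \<le> (real s + 3) * (pi / 2) * sin (\<beta> - \<delta> / 2)"
    by (rule mult_left_mono[OF jordan_inequality]) (use True assms in auto)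
  finally show ?thesis .
next
  case False
  have "sin ((\<beta> + \<gamma>) / 2) = sin (pi - (\<beta> + \<gamma>) / 2)"
    by simp
  also have "\<dots> \<le> pi - (\<beta> + \<gamma>) / 2"
    by (rule sin_x_le_x) (use assms in auto)
  also have "\<dots> \<le> pi - (\<beta> - \<delta> / 2)"
    using assms by argo
  also have "\<dots> = (pi / 2) * (2 * (pi - (\<beta> - \<delta> / 2)) / pi)"
    by simp
  also have "\<dots> \<le> (pi / 2) * sin (pi - (\<beta> - \<delta> / 2))"
    by (rule mult_left_mono[OF jordan_inequality]) (use False assms in auto)
  also have "\<dots> \<le> (real s + 3) * (pi / 2) * sin (\<beta> - \<delta> / 2)"
    using sin_ge_zero[of "\<beta> - \<delta> / 2"] False assms by (simp add: mult_right_mono)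
  finally show ?thesis .
qed

text \<open>Both differences are products of sines by the sum-to-product formula; Jordan's inequality
  compares the factors.\<close>

lemma cos_diff_le_ratio_cos_diff:
  fixes \<alpha> \<beta> \<gamma> \<delta> :: real and s :: nat
  assumes "0 \<le> \<alpha>" "\<alpha> + \<delta> \<le> \<beta>" "\<beta> \<le> \<gamma>" "\<gamma> - \<beta> \<le> (real s + 1) * \<delta>" "\<gamma> \<le> pi" "0 < \<delta>"
  shows "cos \<beta> - cos \<gamma> \<le> (real s + 1) * (real s + 3) * pi^2 / 4 * (cos \<alpha> - cos \<beta>)"
proof -
  have "cos (\<beta> - \<delta>) - cos \<beta> = 2 * sin (\<beta> - \<delta> / 2) * sin (\<delta> / 2)"
    unfolding cos_diff_cos by (simp add: field_simps)
  have "cos \<beta> - cos \<gamma> = 2 * sin ((\<beta> + \<gamma>) / 2) * sin ((\<gamma> - \<beta>) / 2)"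
    by (rule cos_diff_cos)
  also have "\<dots> \<le> 2 * ((real s + 3) * (pi / 2) * sin (\<beta> - \<delta> / 2))
      * ((real s + 1) * (pi / 2) * sin (\<delta> / 2))"
    using sin_half_sum_le[of \<delta> \<beta> \<gamma> s] sin_half_diff_le[of \<beta> \<gamma> s \<delta>] assms
      sin_ge_zero[of "(\<beta> + \<gamma>) / 2"] sin_ge_zero[of "(\<gamma> - \<beta>) / 2"]
    by (intro mult_mono mult_left_mono) auto
  also have "\<dots> = (real s + 1) * (real s + 3) * pi^2 / 4 * (cos (\<beta> - \<delta>) - cos \<beta>)"
    unfolding \<open>cos (\<beta> - \<delta>) - cos \<beta> = 2 * sin (\<beta> - \<delta> / 2) * sin (\<delta> / 2)\<close>
    by (simp add: power2_eq_square field_simps)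
  also have "\<dots> \<le> (real s + 1) * (real s + 3) * pi^2 / 4 * (cos \<alpha> - cos \<beta>)"
    using cos_monotone_0_pi_le[of \<alpha> "\<beta> - \<delta>"] assms by (intro mult_left_mono) auto
  finally show ?thesis .
qed

lemma cos_angles_quasi_uniform_nodes:
  fixes \<theta> :: "nat \<Rightarrow> real" and \<delta> :: real and n s :: nat
  assumes n: "1 \<le> n" and \<delta>: "0 < \<delta>" "(real s + 1) * \<delta> \<le> pi"
    and range: "\<And>i. i \<le> n \<Longrightarrow> 0 \<le> \<theta> i \<and> \<theta> i \<le> pi"
    and step: "\<And>i. i < n \<Longrightarrow> \<theta> i + \<delta> \<le> \<theta> (Suc i) \<and> \<theta> (Suc i) - \<theta> i \<le> (real s + 1) * \<delta>"
    and ends: "\<theta> 0 \<le> (real s + 1) * \<delta>" "pi - \<theta> n \<le> (real s + 1) * \<delta>"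
  shows "quasi_uniform_nodes (\<lambda>i. cos (\<theta> i)) n (sin ((real s + 1) * \<delta> / 2))
    ((real s + 1) * (real s + 3) * pi^2 / 4)"
proof
  fix i
  show "i < n \<Longrightarrow> cos (\<theta> (Suc i)) < cos (\<theta> i)"
    using range[of i] range[of "Suc i"] step[of i] \<delta> by (intro cos_monotone_0_pi) auto
  show "i < n \<Longrightarrow> cos (\<theta> i) - cos (\<theta> (Suc i)) \<le> 2 * sin ((real s + 1) * \<delta> / 2)"
    using range[of i] range[of "Suc i"] step[of i] \<delta> by (intro cos_diff_le_sin_half_width) auto
  show "0 < i \<Longrightarrow> i < n \<Longrightarrow> cos (\<theta> i) - cos (\<theta> (Suc i))
      \<le> (real s + 1) * (real s + 3) * pi^2 / 4 * (cos (\<theta> (i - 1)) - cos (\<theta> i))"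
    using range[of "i - 1"] range[of "Suc i"] step[of "i - 1"] step[of i] \<delta>
    by (intro cos_diff_le_ratio_cos_diff) auto
  \<comment> \<open>Reflecting the angles at pi/2 turns gaps towards the next node into gaps towards
    the previous one.\<close>
  have "cos (pi - \<theta> (Suc i)) - cos (pi - \<theta> i)
      \<le> (real s + 1) * (real s + 3) * pi^2 / 4 * (cos (pi - \<theta> (Suc (Suc i))) - cos (pi - \<theta> (Suc i)))"
    if "Suc i < n"
    using that range[of i] range[of "Suc (Suc i)"] step[of i] step[of "Suc i"] \<delta>
    by (intro cos_diff_le_ratio_cos_diff) auto
  then show "Suc i < n \<Longrightarrow> cos (\<theta> i) - cos (\<theta> (Suc i))
      \<le> (real s + 1) * (real s + 3) * pi^2 / 4 * (cos (\<theta> (Suc i)) - cos (\<theta> (Suc (Suc i))))"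
    by simp
next
  show "1 - cos (\<theta> 0) \<le> 2 * sin ((real s + 1) * \<delta> / 2)"
    using cos_diff_le_sin_half_width[of 0 "\<theta> 0" "(real s + 1) * \<delta>"] range[of 0] ends \<delta> by simp
  show "cos (\<theta> n) + 1 \<le> 2 * sin ((real s + 1) * \<delta> / 2)"
    using cos_diff_le_sin_half_width[of "\<theta> n" pi "(real s + 1) * \<delta>"] range[of n] ends \<delta> by simp
  have "cos (pi - \<theta> 0) - cos pi
      \<le> (real s + 1) * (real s + 3) * pi^2 / 4 * (cos (pi - \<theta> 1) - cos (pi - \<theta> 0))"
    using range[of 0] range[of 1] step[of 0] ends n \<delta> by (intro cos_diff_le_ratio_cos_diff) auto
  then show "1 - cos (\<theta> 0) \<le> (real s + 1) * (real s + 3) * pi^2 / 4 * (cos (\<theta> 0) - cos (\<theta> 1))"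
    by simp
  have "cos (\<theta> n) - cos pi
      \<le> (real s + 1) * (real s + 3) * pi^2 / 4 * (cos (\<theta> (n - 1)) - cos (\<theta> n))"
    using range[of n] range[of "n - 1"] step[of "n - 1"] ends n \<delta> by (intro cos_diff_le_ratio_cos_diff) auto
  then show "cos (\<theta> n) + 1 \<le> (real s + 1) * (real s + 3) * pi^2 / 4 * (cos (\<theta> (n - 1)) - cos (\<theta> n))"
    by simp
qed (use n in auto)

lemma card_add_card_disjoint_le:
  fixes F I :: "nat set"
  assumes "F \<subseteq> {0..N}" "I \<subseteq> {0..N}" "F \<inter> I = {}"
  shows "card F + card I \<le> Suc N"
proof -
  have "card F + card I = card (F \<union> I)"
    using assms by (intro card_Un_disjoint[symmetric]) (auto intro: finite_subset)
  also have "\<dots> \<le> card {0..N}"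
    using assms by (intro card_mono) auto
  finally show ?thesis by simp
qed

lemma sorted_list_of_set_gaps:
  fixes F :: "nat set"
  assumes F: "F \<subseteq> {0..N}" "card F = N + 1 - s" and s: "s \<le> N"
  defines "js \<equiv> sorted_list_of_set F"
  shows "\<And>i. i < N - s \<Longrightarrow> js ! i < js ! Suc i"
    and "\<And>i. i < N - s \<Longrightarrow> js ! Suc i \<le> js ! i + (s + 1)"
    and "js ! 0 \<le> s"
    and "N - s \<le> js ! (N - s)"
    and "\<And>i. i \<le> N - s \<Longrightarrow> js ! i \<le> N"
proof -
  have fin: "finite F"
    using F(1) finite_subset by blast
  have len: "length js = N - s + 1"
    unfolding js_def using fin F(2) s by simp
  have less: "js ! i < js ! j" if "i < j" "j \<le> N - s" for i j
    using sorted_wrt_nth_less[OF strict_sorted_list_of_set[of F]] that len unfolding js_def by simp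
  have le: "js ! i \<le> js ! j" if "i \<le> j" "j \<le> N - s" for i j
    using less[of i j] that by (cases "i = j") auto
  have F_eq: "F = {js ! m | m. m \<le> N - s}"
    using fin set_conv_nth[of js] len unfolding js_def by (simp add: less_Suc_eq_le)
  show bound: "js ! i \<le> N" if "i \<le> N - s" for i
    using F(1) F_eq that by auto
  show "js ! i < js ! Suc i" if "i < N - s" for i
    using less that by simp
  \<comment> \<open>Every run of consecutive indices avoided by F has length at most s.\<close>
  show "js ! Suc i \<le> js ! i + (s + 1)" if i: "i < N - s" for i
  proof -
    have "js ! m \<notin> {js ! i<..<js ! Suc i}" if "m \<le> N - s" for m
      using le[of m i] le[of "Suc i" m] that i by (cases "m \<le> i") auto
    then have "F \<inter> {js ! i<..<js ! Suc i} = {}"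
      unfolding F_eq by blast
    then have "card F + card {js ! i<..<js ! Suc i} \<le> Suc N"
      using F(1) bound[of "Suc i"] i by (intro card_add_card_disjoint_le) auto
    then show ?thesis
      using F(2) s by simp
  qed
  show "js ! 0 \<le> s"
  proof -
    have "F \<inter> {..<js ! 0} = {}"
      using le[of 0] unfolding F_eq by fastforce
    then have "card F + card {..<js ! 0} \<le> Suc N"
      using F(1) bound[of 0] by (intro card_add_card_disjoint_le) auto
    then show ?thesis
      using F(2) s by simp
  qed
  show "N - s \<le> js ! (N - s)"
  proof -
    have "F \<inter> {js ! (N - s)<..N} = {}"
      using le[of _ "N - s"] unfolding F_eq by fastforce
    then have "card F + card {js ! (N - s)<..N} \<le> Suc N"
      using F(1) by (intro card_add_card_disjoint_le) auto
    then show ?thesis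
      using F(2) s by simp
  qed
qed

lemma surviving_nodes_quasi_uniform:
  fixes N s :: nat and F :: "nat set"
  assumes s: "s < N" and F: "F \<subseteq> {0..N}" "card F = N + 1 - s"
  shows "quasi_uniform_nodes (surv_node N F) (N - s) (sin ((real s + 1) * pi / (2 * real N)))
    ((real s + 1) * (real s + 3) * pi^2 / 4)"
proof -
  define js where "js = sorted_list_of_set F"
  define \<delta> where "\<delta> = pi / real N"
  have \<delta>: "0 < \<delta>" "real N * \<delta> = pi"
    unfolding \<delta>_def using s by auto
  note gaps = sorted_list_of_set_gaps[OF F less_imp_le[OF s], folded js_def]
  have scaled: "real a * \<delta> \<le> real b * \<delta>" if "a \<le> b" for a b
    using that \<delta> by (simp add: mult_right_mono)
  have "quasi_uniform_nodes (\<lambda>i. cos (real (js ! i) * \<delta>)) (N - s) (sin ((real s + 1) * \<delta> / 2))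
    ((real s + 1) * (real s + 3) * pi^2 / 4)"
  proof (rule cos_angles_quasi_uniform_nodes)
    show "(real s + 1) * \<delta> \<le> pi"
      using scaled[of "s + 1" N] s \<delta> by (simp add: add.commute)
    show "0 \<le> real (js ! i) * \<delta> \<and> real (js ! i) * \<delta> \<le> pi" if "i \<le> N - s" for i
      using scaled[OF gaps(5)[OF that]] \<delta> by simp
    show "real (js ! i) * \<delta> + \<delta> \<le> real (js ! Suc i) * \<delta>
        \<and> real (js ! Suc i) * \<delta> - real (js ! i) * \<delta> \<le> (real s + 1) * \<delta>" if "i < N - s" for i
      using scaled[of "js ! i + 1" "js ! Suc i"] scaled[OF gaps(2)[OF that]] gaps(1)[OF that]
      by (simp add: algebra_simps)
    show "real (js ! 0) * \<delta> \<le> (real s + 1) * \<delta>"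
      using scaled[of "js ! 0" "s + 1"] gaps(3) by (simp add: add.commute)
    show "pi - real (js ! (N - s)) * \<delta> \<le> (real s + 1) * \<delta>"
      using scaled[of N "js ! (N - s) + (s + 1)"] gaps(4) \<delta> by (simp add: algebra_simps)
  qed (use s \<delta> in auto)
  moreover have "surv_node N F = (\<lambda>i. cos (real (js ! i) * \<delta>))"
    unfolding surv_node_def js_def \<delta>_def by auto
  moreover have "(real s + 1) * \<delta> / 2 = (real s + 1) * pi / (2 * real N)"
    unfolding \<delta>_def by simp
  ultimately show ?thesis
    by simp
qed

lemma abs_le_supnorm:
  assumes "continuous_on {-1..1} h" "z \<in> {-1..1}"
  shows "\<bar>h z\<bar> \<le> supnorm h"
proof -
  have "bdd_above ((\<lambda>z. \<bar>h z\<bar>) ` {-1..1})"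
    using assms(1) by (intro bounded_imp_bdd_above compact_imp_bounded compact_continuous_image
        continuous_on_rabs) auto
  then show ?thesis
    unfolding supnorm_def using assms(2) by (rule cSUP_upper2) simp
qed

lemma supnorm_le:
  assumes "\<And>z. z \<in> {-1..1} \<Longrightarrow> \<bar>h z\<bar> \<le> B"
  shows "supnorm h \<le> B"
  unfolding supnorm_def using assms by (intro cSUP_least) auto

lemma berrut_error_eq:
  assumes z: "\<And>i. i \<le> n \<Longrightarrow> z \<noteq> x i" and D: "berrut_denom x n z \<noteq> 0"
  shows "berrut x (\<lambda>i. g (x i)) n z - g z
    = - (\<Sum>i\<le>n. (-1)^i * divdiff g (x i) z) / berrut_denom x n z"
proof -
  have "berrut x (\<lambda>i. g (x i)) n z - g z
      = ((\<Sum>i\<le>n. (-1)^i / (z - x i) * g (x i)) - g z * berrut_denom x n z) / berrut_denom x n z"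
    using z D by (auto simp: berrut_def berrut_denom_def diff_divide_distrib)
  also have "(\<Sum>i\<le>n. (-1)^i / (z - x i) * g (x i)) - g z * berrut_denom x n z
      = (\<Sum>i\<le>n. - ((-1)^i * divdiff g (x i) z))"
    unfolding berrut_denom_def sum_distrib_left sum_subtractf[symmetric]
  proof (rule sum.cong)
    fix i assume "i \<in> {..n}"
    then have "x i \<noteq> z"
      using z by auto
    then show "(-1)^i / (z - x i) * g (x i) - g z * ((-1)^i / (z - x i)) = - ((-1)^i * divdiff g (x i) z)"
      by (simp add: divdiff_def divide_simps) (simp add: algebra_simps)
  qed simp
  finally show ?thesis
    by (simp add: sum_negf)
qed

lemma (in C2_on_unit_interval) berrut_error_bound:
  assumes "quasi_uniform_nodes x n \<sigma> R" and nodes: "\<And>i. i \<le> n \<Longrightarrow> x i \<in> {-1..1}"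
    and z: "z \<in> {-1..1}"
  shows "\<bar>berrut x (\<lambda>i. g (x i)) n z - g z\<bar> \<le> 2 * (1 + R) * \<sigma> * (if odd n then M2 else M2 + M1)"
proof -
  interpret quasi_uniform_nodes x n \<sigma> R by fact
  define M where "M = (if odd n then M2 else M2 + M1)"
  have M_nonneg: "0 \<le> M"
    unfolding M_def using M1_nonneg M2_nonneg by simp
  have "\<bar>berrut x (\<lambda>i. g (x i)) n z - g z\<bar> \<le> 2 * (1 + R) * \<sigma> * M"
  proof (cases "\<exists>i\<le>n. z = x i")
    case True
    then have "x (LEAST i. i \<le> n \<and> z = x i) = z"
      by (metis (mono_tags, lifting) LeastI_ex)
    then show ?thesis
      using True M_nonneg sigma_pos R_nonneg by (simp add: berrut_def)
  next
    case False
    then have not_node: "\<And>i. i \<le> n \<Longrightarrow> z \<noteq> x i"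
      by auto
    have denom: "1 \<le> 2 * \<sigma> * (1 + R) * \<bar>berrut_denom x n z\<bar>"
      using berrut_denom_lower_bound[OF z not_node] .
    then have "0 < \<bar>berrut_denom x n z\<bar>"
      by (cases "berrut_denom x n z = 0") auto
    have "\<bar>berrut x (\<lambda>i. g (x i)) n z - g z\<bar>
        = \<bar>\<Sum>i\<le>n. (-1)^i * divdiff g (x i) z\<bar> / \<bar>berrut_denom x n z\<bar>"
      using berrut_error_eq[OF not_node, where g = g] \<open>0 < \<bar>berrut_denom x n z\<bar>\<close>
      by (simp add: abs_divide)
    also have "\<dots> \<le> M / \<bar>berrut_denom x n z\<bar>"
      using alternating_divdiff_sum_bound[of n x z, OF decreasing nodes z not_node]
      unfolding M_def by (intro divide_right_mono) auto
    also have "\<dots> \<le> 2 * (1 + R) * \<sigma> * M"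
      using mult_left_mono[OF denom M_nonneg] \<open>0 < \<bar>berrut_denom x n z\<bar>\<close>
      by (simp add: divide_le_eq algebra_simps)
    finally show ?thesis .
  qed
  then show ?thesis
    unfolding M_def .
qed

theorem theorem8:
  fixes K N s :: nat and X :: "nat \<Rightarrow> real" and f :: "real \<Rightarrow> real"
    and g g1 g2 :: "real \<Rightarrow> real" and F :: "nat set"
  assumes "K \<ge> 1" and "s + 2 < N"
    and "g = (\<lambda>z. f (enc_u K X z))"
    and "\<forall>z\<in>{-1..1}. (g has_real_derivative g1 z) (at z within {-1..1})"
    and "\<forall>z\<in>{-1..1}. (g1 has_real_derivative g2 z) (at z within {-1..1})"
    and "continuous_on {-1..1} g2"
    and "F \<subseteq> {0..N}" and "card F = N + 1 - s"
  shows "(odd (N - s) \<longrightarrow>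
           supnorm (\<lambda>z. dec_r N s F g z - g z)
             \<le> 2 * (1 + (real s + 1) * (real s + 3) * pi^2 / 4)
                 * sin ((real s + 1) * pi / (2 * real N)) * supnorm g2)
       \<and> (even (N - s) \<longrightarrow>
           supnorm (\<lambda>z. dec_r N s F g z - g z)
             \<le> 2 * (1 + (real s + 1) * (real s + 3) * pi^2 / 4)
                 * sin ((real s + 1) * pi / (2 * real N)) * (supnorm g2 + supnorm g1))"
proof -
  define \<sigma> where "\<sigma> = sin ((real s + 1) * pi / (2 * real N))"
  define R where "R = (real s + 1) * (real s + 3) * pi^2 / 4"
  have nodes: "quasi_uniform_nodes (surv_node N F) (N - s) \<sigma> R"
    unfolding \<sigma>_def R_def using surviving_nodes_quasi_uniform assms(2,7,8) by simp
  have "continuous_on {-1..1} g1"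
    using assms(5) by (intro DERIV_continuous_on) auto
  then interpret C2_on_unit_interval g g1 g2 "supnorm g1" "supnorm g2"
    using assms(4-6) abs_le_supnorm by unfold_locales auto
  have "supnorm (\<lambda>z. dec_r N s F g z - g z)
      \<le> 2 * (1 + R) * \<sigma> * (if odd (N - s) then supnorm g2 else supnorm g2 + supnorm g1)"
    unfolding dec_r_def
    by (rule supnorm_le, rule berrut_error_bound[OF nodes]) (auto simp: surv_node_def)
  then show ?thesis
    unfolding \<sigma>_def R_def by auto
qed

end
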